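(* There is a family of $1$-dimensional Hegselmann–Krause systems with $n$ agents (for infinitely many $n$) and a fixed confidence bound $\varepsilon>0$, whose social networks have $|E|=\Theta(n^2)$ edges and whose initial states $S_0$ satisfy $\Phi(S_0)=\Theta(n^2\varepsilon^2)$, such that the expected potential drop in the first step under uniform random asynchronous updates is $\mathbb{E}[\Phi(S_0)-\Phi(S_1)]=\Theta(\varepsilon^2/n^3)$.
   Context: A $1$-dimensional Hegselmann–Krause system has a finite undirected graph $G=(V,E)$ (social network) with $n=|V|$ agents, a confidence bound $\varepsilon>0$, and positions $x_v(t)\in\mathbb{R}$. The influencing neighborhood is $N_v(t)=\{u:\{u,v\}\in E,\ |x_u(t)-x_v(t)|\le\varepsilon\}\cup\{v\}$. Uniform random asynchronous updates: at each step $t$ one agent $v$ is chosen uniformly at random and set to $x_v(t+1)=\frac{1}{|N_v(t)|}\sum_{u\in N_v(t)}x_u(t)$, others unchanged; $S_t$ denotes the state at time $t$. The potential of a state is $\Phi(S)=\sum_{\{u,v\}\in E}\min\{|x_u-x_v|^2,\varepsilon^2\}$. *)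

theory Defs
  imports Complex_Main
begin

text \<open>Each undirected edge {u,v} appears as both (u,v) and (v,u).\<close>
definition hk_graph :: "nat \<Rightarrow> (nat \<times> nat) set \<Rightarrow> bool" where
  "hk_graph n E \<longleftrightarrow> E \<subseteq> {..<n} \<times> {..<n} \<and> sym E \<and> (\<forall>v. (v, v) \<notin> E)"

definition und_edges :: "(nat \<times> nat) set \<Rightarrow> (nat \<times> nat) set" where
  "und_edges E = {(u, v). (u, v) \<in> E \<and> u < v}"

definition num_edges :: "(nat \<times> nat) set \<Rightarrow> nat" where
  "num_edges E = card (und_edges E)"

definition hk_nbhd :: "(nat \<times> nat) set \<Rightarrow> real \<Rightarrow> (nat \<Rightarrow> real) \<Rightarrow> nat \<Rightarrow> nat set" where
  "hk_nbhd E eps x v = {u. (u, v) \<in> E \<and> \<bar>x u - x v\<bar> \<le> eps} \<union> {v}"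

definition hk_update :: "(nat \<times> nat) set \<Rightarrow> real \<Rightarrow> (nat \<Rightarrow> real) \<Rightarrow> nat \<Rightarrow> (nat \<Rightarrow> real)" where
  "hk_update E eps x v =
     x(v := (\<Sum>u\<in>hk_nbhd E eps x v. x u) / real (card (hk_nbhd E eps x v)))"

definition hk_potential :: "(nat \<times> nat) set \<Rightarrow> real \<Rightarrow> (nat \<Rightarrow> real) \<Rightarrow> real" where
  "hk_potential E eps x = (\<Sum>(u, v)\<in>und_edges E. min ((x u - x v)^2) (eps^2))"

definition hk_expected_drop :: "nat \<Rightarrow> (nat \<times> nat) set \<Rightarrow> real \<Rightarrow> (nat \<Rightarrow> real) \<Rightarrow> real" where
  "hk_expected_drop n E eps x =
     (\<Sum>v<n. hk_potential E eps x - hk_potential E eps (hk_update E eps x v)) / real n"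

end

theory Submission
  imports Defs
begin

text \<open>On the complete graph with \<open>\<epsilon> = 1\<close>, place agents 0 and 1 at distance \<open>1/n\<close> and
  spread all other agents so far apart that every other pair is out of confidence
  range. Every edge but one then contributes \<open>\<epsilon>\<^sup>2\<close>, so \<open>\<Phi>(S\<^sub>0) = \<Theta>(n\<^sup>2)\<close>; only agents
  0 and 1 can move, each halving the gap, which lowers \<open>\<Phi>\<close> by \<open>3/(4n\<^sup>2)\<close>. Averaging over
  the \<open>n\<close> choices of agent gives the expected drop \<open>3/(2n\<^sup>3)\<close>.\<close>

lemma hk_nbhd_eq_singleton:
  assumes "\<And>u. (u, v) \<in> E \<Longrightarrow> eps < \<bar>x u - x v\<bar>"
  shows "hk_nbhd E eps x v = {v}"
  using assms by (force simp: hk_nbhd_def)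

lemma hk_update_eq_self:
  assumes "\<And>u. (u, v) \<in> E \<Longrightarrow> eps < \<bar>x u - x v\<bar>"
  shows "hk_update E eps x v = x"
  using hk_nbhd_eq_singleton[of v E eps x] assms by (simp add: hk_update_def)

lemma hk_potential_one_close_edge:
  assumes "finite E" and ab: "(a, b) \<in> und_edges E" and "\<bar>x a - x b\<bar> \<le> eps"
    and far: "\<And>u v. (u, v) \<in> und_edges E - {(a, b)} \<Longrightarrow> eps \<le> \<bar>x u - x v\<bar>"
  shows "hk_potential E eps x = (x a - x b)\<^sup>2 + eps\<^sup>2 * (real (num_edges E) - 1)"
proof -
  let ?g = "\<lambda>(u, v). min ((x u - x v)\<^sup>2) (eps\<^sup>2)"
  have fin: "finite (und_edges E)"
    using \<open>finite E\<close> by (rule rev_finite_subset) (auto simp: und_edges_def)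
  have "0 \<le> eps"
    using assms(3) by linarith
  have "?g (a, b) = (x a - x b)\<^sup>2"
    using power_mono[OF assms(3) abs_ge_zero, of 2] by simp
  moreover have "?g (u, v) = eps\<^sup>2" if "(u, v) \<in> und_edges E - {(a, b)}" for u v
    using power_mono[OF far[OF that] \<open>0 \<le> eps\<close>, of 2] by simp
  then have "(\<Sum>e\<in>und_edges E - {(a, b)}. ?g e) = (\<Sum>e\<in>und_edges E - {(a, b)}. eps\<^sup>2)"
    by (intro sum.cong) auto
  ultimately have "hk_potential E eps x = (x a - x b)\<^sup>2 + (\<Sum>e\<in>und_edges E - {(a, b)}. eps\<^sup>2)"
    unfolding hk_potential_def using sum.remove[OF fin ab, of ?g] by simp
  also have "\<dots> = (x a - x b)\<^sup>2 + eps\<^sup>2 * (real (num_edges E) - 1)"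
    using fin ab card_gt_0_iff[of "und_edges E"]
    by (auto simp: num_edges_def card_Diff_singleton of_nat_diff)
  finally show ?thesis .
qed

definition complete_graph :: "nat \<Rightarrow> (nat \<times> nat) set" where
  "complete_graph n = {(u, v). u < n \<and> v < n \<and> u \<noteq> v}"

lemma hk_graph_complete_graph: "hk_graph n (complete_graph n)"
  by (auto simp: hk_graph_def complete_graph_def sym_def)

lemma finite_complete_graph: "finite (complete_graph n)"
  by (rule finite_subset[of _ "{..<n} \<times> {..<n}"]) (auto simp: complete_graph_def)

lemma und_edges_complete_graph: "und_edges (complete_graph n) = {(u, v). u < v \<and> v < n}"
  by (auto simp: und_edges_def complete_graph_def)

lemma num_edges_complete_graph:
  "2 * real (num_edges (complete_graph n)) = real n * (real n - 1)"
proof -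
  have "und_edges (complete_graph n) = prod.swap ` (SIGMA v:{..<n}. {..<v})"
    by (auto simp: und_edges_complete_graph)
  then have "num_edges (complete_graph n) = (\<Sum>v<n. v)"
    by (simp add: num_edges_def card_image)
  moreover have "2 * (\<Sum>v<n. real v) = real n * (real n - 1)"
    by (induction n) (simp_all add: algebra_simps)
  ultimately show ?thesis by simp
qed

definition pair_state :: "real \<Rightarrow> real \<Rightarrow> nat \<Rightarrow> real" where
  "pair_state a b v = (if v = 0 then a else if v = 1 then b else 2 * real v)"

lemma pair_state_far:
  assumes "a \<in> {0..1}" "b \<in> {0..1}" "u \<noteq> v" "2 \<le> max u v"
  shows "1 < \<bar>pair_state a b u - pair_state a b v\<bar>"
proof -
  have "u + 1 \<le> v \<or> v + 1 \<le> u"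
    using \<open>u \<noteq> v\<close> by linarith
  then have "1 \<le> \<bar>real u - real v\<bar>"
    by (auto simp flip: of_nat_Suc)
  then show ?thesis
    using assms by (auto simp: pair_state_def)
qed

lemma pair_state_close:
  assumes "a \<in> {0..1}" "b \<in> {0..1}" "u \<le> 1" "v \<le> 1"
  shows "\<bar>pair_state a b u - pair_state a b v\<bar> \<le> 1"
proof -
  have "pair_state a b w \<in> {0..1}" if "w \<le> 1" for w
    using that assms(1,2) by (cases w) (auto simp: pair_state_def)
  from this[OF assms(3)] this[OF assms(4)] show ?thesis
    by auto
qed

lemma hk_nbhd_pair_state:
  assumes "a \<in> {0..1}" "b \<in> {0..1}" "2 \<le> n" "v \<le> 1"
  shows "hk_nbhd (complete_graph n) 1 (pair_state a b) v = {0, 1}"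
proof -
  have mem: "u \<in> hk_nbhd (complete_graph n) 1 (pair_state a b) v \<longleftrightarrow> u \<le> 1" for u
  proof (cases "u \<le> 1")
    case True
    have "u = v \<or> (u, v) \<in> complete_graph n"
      using True assms(3,4) by (auto simp: complete_graph_def)
    then show ?thesis
      using True pair_state_close[OF assms(1,2) True assms(4)] by (auto simp: hk_nbhd_def)
  next
    case False
    then have "u \<noteq> v" "2 \<le> max u v"
      using assms(4) by auto
    then have "\<not> \<bar>pair_state a b u - pair_state a b v\<bar> \<le> 1"
      using pair_state_far[OF assms(1,2)] by (simp add: not_le)
    then show ?thesis
      using False \<open>u \<noteq> v\<close> by (simp add: hk_nbhd_def)
  qed
  show ?thesis
  proof (rule set_eqI)
    show "u \<in> hk_nbhd (complete_graph n) 1 (pair_state a b) v \<longleftrightarrow> u \<in> {0, 1}" for u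
      using mem[of u] by auto
  qed
qed

lemma hk_update_pair_state_0:
  assumes "a \<in> {0..1}" "b \<in> {0..1}" "2 \<le> n"
  shows "hk_update (complete_graph n) 1 (pair_state a b) 0 = pair_state ((a + b) / 2) b"
  using hk_nbhd_pair_state[OF assms] by (auto simp: hk_update_def pair_state_def)

lemma hk_update_pair_state_1:
  assumes "a \<in> {0..1}" "b \<in> {0..1}" "2 \<le> n"
  shows "hk_update (complete_graph n) 1 (pair_state a b) 1 = pair_state a ((a + b) / 2)"
  using hk_nbhd_pair_state[OF assms] by (auto simp: hk_update_def pair_state_def)

lemma hk_update_pair_state_idle:
  assumes "a \<in> {0..1}" "b \<in> {0..1}" "2 \<le> v"
  shows "hk_update (complete_graph n) 1 (pair_state a b) v = pair_state a b"
  using assms by (intro hk_update_eq_self pair_state_far) (auto simp: complete_graph_def)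

lemma hk_potential_pair_state:
  assumes "a \<in> {0..1}" "b \<in> {0..1}" "2 \<le> n"
  shows "hk_potential (complete_graph n) 1 (pair_state a b)
    = (a - b)\<^sup>2 + real (num_edges (complete_graph n)) - 1"
proof -
  have edge: "(0, 1) \<in> und_edges (complete_graph n)"
    using \<open>2 \<le> n\<close> by (simp add: und_edges_complete_graph)
  have close: "\<bar>pair_state a b 0 - pair_state a b 1\<bar> \<le> 1"
    using assms(1,2) by (auto simp: pair_state_def)
  have far: "1 \<le> \<bar>pair_state a b u - pair_state a b v\<bar>"
    if "(u, v) \<in> und_edges (complete_graph n) - {(0, 1)}" for u v
    using that assms
    by (intro less_imp_le[OF pair_state_far]) (auto simp: und_edges_complete_graph)
  show ?thesis
    using hk_potential_one_close_edge[OF finite_complete_graph edge close far]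
    by (simp add: pair_state_def[of a b 0] pair_state_def[of a b "Suc 0"])
qed

lemma hk_expected_drop_pair_state:
  assumes "a \<in> {0..1}" "b \<in> {0..1}" "2 \<le> n"
  shows "hk_expected_drop n (complete_graph n) 1 (pair_state a b) = 3 * (a - b)\<^sup>2 / (2 * real n)"
proof -
  let ?\<Phi> = "hk_potential (complete_graph n) 1"
  let ?drop = "\<lambda>v. ?\<Phi> (pair_state a b) - ?\<Phi> (hk_update (complete_graph n) 1 (pair_state a b) v)"
  have mid: "(a + b) / 2 \<in> {0..1}"
    using assms(1,2) by auto
  have drop: "?drop v = (if v \<le> 1 then 3 / 4 * (a - b)\<^sup>2 else 0)" for v
  proof -
    consider "v = 0" | "v = 1" | "2 \<le> v" by linarith
    then show ?thesis
    proof cases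
      case 1
      then show ?thesis
        using hk_potential_pair_state[OF assms] hk_potential_pair_state[OF mid assms(2,3)]
        by (simp add: hk_update_pair_state_0[OF assms] power2_eq_square field_simps)
    next
      case 2
      then have "hk_update (complete_graph n) 1 (pair_state a b) v = pair_state a ((a + b) / 2)"
        using hk_update_pair_state_1[OF assms] by simp
      then show ?thesis
        using 2 hk_potential_pair_state[OF assms] hk_potential_pair_state[OF assms(1) mid assms(3)]
        by (simp add: power2_eq_square field_simps)
    next
      case 3
      then show ?thesis
        by (simp add: hk_update_pair_state_idle[OF assms(1,2)])
    qed
  qed
  have "{..<n} \<inter> {v. v \<le> 1} = {0, 1}"
    using \<open>2 \<le> n\<close> by auto
  then have total: "(\<Sum>v<n. ?drop v) = 3 * (a - b)\<^sup>2 / 2"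
    by (simp add: drop sum.If_cases)
  show ?thesis
    unfolding hk_expected_drop_def total by simp
qed

lemma num_edges_complete_graph_bounds:
  assumes "2 \<le> n"
  shows "1 / 4 * real n ^ 2 \<le> real (num_edges (complete_graph n))"
    and "real (num_edges (complete_graph n)) \<le> 1 / 2 * real n ^ 2"
proof -
  have "2 * real n \<le> real n * real n"
    using assms by simp
  then show "1 / 4 * real n ^ 2 \<le> real (num_edges (complete_graph n))"
    and "real (num_edges (complete_graph n)) \<le> 1 / 2 * real n ^ 2"
    using num_edges_complete_graph[of n] by (simp_all add: power2_eq_square algebra_simps)
qed

lemma hk_potential_initial_bounds:
  assumes "3 \<le> n"
  shows "1 / 8 * real n ^ 2 \<le> hk_potential (complete_graph n) 1 (pair_state 0 (1 / real n))"
    and "hk_potential (complete_graph n) 1 (pair_state 0 (1 / real n)) \<le> 1 / 2 * real n ^ 2"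
proof -
  have "2 \<le> n" and "9 \<le> real n ^ 2"
    using assms power_mono[of 3 "real n" 2] by simp_all
  have "1 / real n \<in> {0..1}" and gap_sq: "(1 / real n)\<^sup>2 \<le> 1"
    using assms by (simp_all add: power_le_one)
  then have \<Phi>: "hk_potential (complete_graph n) 1 (pair_state 0 (1 / real n))
      = (1 / real n)\<^sup>2 + real (num_edges (complete_graph n)) - 1"
    using hk_potential_pair_state[of 0 "1 / real n" n] \<open>2 \<le> n\<close> by simp
  show "1 / 8 * real n ^ 2 \<le> hk_potential (complete_graph n) 1 (pair_state 0 (1 / real n))"
    unfolding \<Phi> using num_edges_complete_graph_bounds(1)[OF \<open>2 \<le> n\<close>] \<open>9 \<le> real n ^ 2\<close>
      zero_le_power2[of "1 / real n"] by linarith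
  show "hk_potential (complete_graph n) 1 (pair_state 0 (1 / real n)) \<le> 1 / 2 * real n ^ 2"
    unfolding \<Phi> using num_edges_complete_graph_bounds(2)[OF \<open>2 \<le> n\<close>] gap_sq by linarith
qed

lemma hk_expected_drop_initial:
  assumes "2 \<le> n"
  shows "hk_expected_drop n (complete_graph n) 1 (pair_state 0 (1 / real n)) = 3 / 2 / real n ^ 3"
  using assms hk_expected_drop_pair_state[of 0 "1 / real n" n]
  by (simp add: power2_eq_square power3_eq_cube)

theorem theorem3:
  shows "\<exists>eps::real. eps > 0 \<and>
    (\<exists>(N::nat set) (G::nat \<Rightarrow> (nat \<times> nat) set) (X::nat \<Rightarrow> nat \<Rightarrow> real)
        (c1::real) C1 c2 C2 c3 C3.
       infinite N \<and> c1 > 0 \<and> C1 > 0 \<and> c2 > 0 \<and> C2 > 0 \<and> c3 > 0 \<and> C3 > 0 \<and>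
       (\<forall>n\<in>N.
          hk_graph n (G n) \<and>
          c1 * real n ^ 2 \<le> real (num_edges (G n)) \<and>
          real (num_edges (G n)) \<le> C1 * real n ^ 2 \<and>
          c2 * real n ^ 2 * eps ^ 2 \<le> hk_potential (G n) eps (X n) \<and>
          hk_potential (G n) eps (X n) \<le> C2 * real n ^ 2 * eps ^ 2 \<and>
          c3 * eps ^ 2 / real n ^ 3 \<le> hk_expected_drop n (G n) eps (X n) \<and>
          hk_expected_drop n (G n) eps (X n) \<le> C3 * eps ^ 2 / real n ^ 3))"
  by (rule exI[of _ 1], rule conjI, simp,
      rule exI[of _ "{3..}"], rule exI[of _ complete_graph],
      rule exI[of _ "\<lambda>n. pair_state 0 (1 / real n)"],
      rule exI[of _ "1 / 4"], rule exI[of _ "1 / 2"], rule exI[of _ "1 / 8"],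
      rule exI[of _ "1 / 2"], rule exI[of _ "3 / 2"], rule exI[of _ "3 / 2"],
      intro conjI ballI, simp_all only: power_one mult_1_right atLeast_iff)
    ((rule num_edges_complete_graph_bounds hk_potential_initial_bounds; simp)
      | simp add: infinite_Ici hk_graph_complete_graph hk_expected_drop_initial)+

end
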